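(* Let $H$ be an $l$-ARS graph. Then $\chi_c(H)=l$, and there exists an integer $n_0$ such that every graph $G\in\mathrm{red}(\mathrm{Forb}(H))$ with $|V(G)|\ge n_0$ has at most one non-edge. In particular, $H$ is $2$-critical.
   Context: All graphs are finite and simple; $\mathrm{Forb}(H)$ is the family of graphs with no induced subgraph isomorphic to $H$. A non-edge is a pair of distinct non-adjacent vertices. $\mathcal{C}$ is the family of complete graphs; $\iota(J)$ is the family of graphs isomorphic to induced subgraphs of $J$; $\mathcal{F}_1\vee\mathcal{F}_2$ (resp. $\mathcal{F}_1\wedge\mathcal{F}_2$) is the family of disjoint unions (resp. joins) of a graph in $\mathcal{F}_1$ and a graph in $\mathcal{F}_2$. $K_1$ is the one-vertex graph, $S_3$ the edgeless graph on $3$ vertices, $C_4$ the $4$-cycle, $\bar P_3$ the complement of the $3$-vertex path. $\mathcal{H}(s,t)$ is the family of graphs whose vertex set can be partitioned into $s$ stable sets and $t$ cliques. For a hereditary family $\mathcal{F}$, $\chi_c(\mathcal{F})$ is the maximum $l$ with $\mathcal{H}(s,l-s)\subseteq\mathcal{F}$ for some $0\le s\le l$; $\chi_c(H)=\chi_c(\mathrm{Forb}(H))$ (equivalently, the maximum $l$ such that $H\notin\mathcal{H}(s,t)$ for some $s,t\ge0$ with $s+t=l$). With $l=\chi_c(\mathcal{F})$, a graph $J$ is $\mathcal{F}$-reduced if there is $0\le s\le l-1$ such that $\mathcal{F}$ contains every graph whose vertex set partitions into $l$ parts, one inducing a graph isomorphic to an induced subgraph of $J$, $s$ stable sets and $l-1-s$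 cliques; $\mathrm{red}(\mathcal{F})$ is the family of $\mathcal{F}$-reduced graphs. A graph $G$ is an $s$-star if there is $S\subseteq V(G)$, $|S|\le s$, with $G-S$ complete or edgeless and every vertex of $S$ adjacent to all or to none of $V(G)\setminus S$. A graph $H$ is $s$-critical if there is $n_0$ such that every $K\in\mathrm{red}(\mathrm{Forb}(H))$ with $|V(K)|\ge n_0$ is an $s$-star. A graph $H$ is an $l$-ARS-graph ($l$ a positive integer) if: (ARS1) for every $1\le s\le l$, $V(H)$ can be partitioned into $s$ stable sets and $l-s$ cliques; (ARS2) for each $\mathcal{G}\in\{\iota(K_1)\vee\mathcal{C},\iota(S_3)\wedge\mathcal{C},\iota(C_4)\wedge\mathcal{C},\iota(\bar P_3)\wedge\mathcal{C}\}$, $V(H)$ can be partitioned into $l-1$ cliques and a set inducing a graph in $\mathcal{G}$; (ARS3) there is a partition $\mathcal{X}_0=\{X_1,\dots,X_l\}$ of $V(H)$ with $X_1,\dots,X_{l-2}$ cliques, each of $H[X_{l-1}],H[X_l]$ having exactly one non-edge, and the four vertices of these two non-edges forming an independent set; (ARS4) for every partition $\mathcal{X}\ne\mathcal{X}_0$ of $V(H)$ with $|\mathcal{X}|=l$ some $X\in\mathcal{X}$ has $H[X]$ with at least two non-edges. *)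

theory Defs
  imports Main "HOL-Library.Disjoint_Sets"
begin

record 'a graph =
  verts :: "'a set"
  adj :: "'a \<Rightarrow> 'a \<Rightarrow> bool"

definition graph :: "('a, 'b) graph_scheme \<Rightarrow> bool" where
  "graph G \<longleftrightarrow> finite (verts G) \<and>
     (\<forall>x y. adj G x y \<longrightarrow> x \<in> verts G \<and> y \<in> verts G \<and> x \<noteq> y \<and> adj G y x)"

definition induced :: "'a graph \<Rightarrow> 'a set \<Rightarrow> 'a graph" where
  "induced G X = \<lparr>verts = X, adj = (\<lambda>x y. x \<in> X \<and> y \<in> X \<and> adj G x y)\<rparr>"

definition iso :: "'a graph \<Rightarrow> 'b graph \<Rightarrow> bool" where
  "iso G H \<longleftrightarrow> (\<exists>f. bij_betw f (verts G) (verts H) \<and>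
     (\<forall>x\<in>verts G. \<forall>y\<in>verts G. adj G x y \<longleftrightarrow> adj H (f x) (f y)))"

definition has_induced :: "'a graph \<Rightarrow> 'b graph \<Rightarrow> bool" where
  "has_induced G H \<longleftrightarrow> (\<exists>X \<subseteq> verts G. iso (induced G X) H)"

definition stable :: "'a graph \<Rightarrow> 'a set \<Rightarrow> bool" where
  "stable G X \<longleftrightarrow> (\<forall>x\<in>X. \<forall>y\<in>X. \<not> adj G x y)"

definition clique :: "'a graph \<Rightarrow> 'a set \<Rightarrow> bool" where
  "clique G X \<longleftrightarrow> (\<forall>x\<in>X. \<forall>y\<in>X. x \<noteq> y \<longrightarrow> adj G x y)"

definition nonedges :: "'a graph \<Rightarrow> 'a set set" where
  "nonedges G = {{x, y} | x y. x \<in> verts G \<and> y \<in> verts G \<and> x \<noteq> y \<and> \<not> adj G x y}"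

text \<open>Graphs are taken with vertices in nat: every finite graph is isomorphic to one.\<close>
definition Forb :: "'a graph \<Rightarrow> nat graph set" where
  "Forb H = {G. graph G \<and> \<not> has_induced G H}"

text \<open>Partition of V into n indexed parts P 0, ..., P (n-1) (parts may be empty).\<close>
definition ipartition :: "'a set \<Rightarrow> nat \<Rightarrow> (nat \<Rightarrow> 'a set) \<Rightarrow> bool" where
  "ipartition V n P \<longleftrightarrow> (\<Union>i<n. P i) = V \<and>
     (\<forall>i<n. \<forall>j<n. i \<noteq> j \<longrightarrow> P i \<inter> P j = {})"

definition st_partitionable :: "'a graph \<Rightarrow> nat \<Rightarrow> nat \<Rightarrow> bool" where
  "st_partitionable G s t \<longleftrightarrow> (\<exists>P. ipartition (verts G) (s + t) P \<and>
     (\<forall>i<s. stable G (P i)) \<and> (\<forall>i. s \<le> i \<and> i < s + t \<longrightarrow> clique G (P i)))"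

definition Hst :: "nat \<Rightarrow> nat \<Rightarrow> nat graph set" where
  "Hst s t = {G. graph G \<and> st_partitionable G s t}"

definition chi_c :: "nat graph set \<Rightarrow> nat" where
  "chi_c F = Max {l. \<exists>s\<le>l. Hst s (l - s) \<subseteq> F}"

definition chi_c_graph :: "'a graph \<Rightarrow> nat" where
  "chi_c_graph H = chi_c (Forb H)"

definition reduced :: "nat graph set \<Rightarrow> nat graph \<Rightarrow> bool" where
  "reduced F J \<longleftrightarrow> (let l = chi_c F in \<exists>s. s + 1 \<le> l \<and>
     (\<forall>G :: nat graph. graph G \<longrightarrow>
        (\<exists>P. ipartition (verts G) l P \<and> has_induced J (induced G (P 0)) \<and>
             (\<forall>i. 1 \<le> i \<and> i \<le> s \<longrightarrow> stable G (P i)) \<and>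
             (\<forall>i. s + 1 \<le> i \<and> i < l \<longrightarrow> clique G (P i))) \<longrightarrow> G \<in> F))"

definition red :: "nat graph set \<Rightarrow> nat graph set" where
  "red F = {J. graph J \<and> reduced F J}"

definition s_star :: "nat \<Rightarrow> 'a graph \<Rightarrow> bool" where
  "s_star s G \<longleftrightarrow> (\<exists>S \<subseteq> verts G. card S \<le> s \<and>
     (clique G (verts G - S) \<or> stable G (verts G - S)) \<and>
     (\<forall>v\<in>S. (\<forall>u\<in>verts G - S. adj G v u) \<or> (\<forall>u\<in>verts G - S. \<not> adj G v u)))"

definition critical :: "nat \<Rightarrow> 'a graph \<Rightarrow> bool" where
  "critical s H \<longleftrightarrow> (\<exists>n0. \<forall>K\<in>red (Forb H). card (verts K) \<ge> n0 \<longrightarrow> s_star s K)"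

definition K1 :: "nat graph" where "K1 = \<lparr>verts = {0}, adj = (\<lambda>_ _. False)\<rparr>"
definition S3 :: "nat graph" where "S3 = \<lparr>verts = {0,1,2}, adj = (\<lambda>_ _. False)\<rparr>"
definition C4 :: "nat graph" where
  "C4 = \<lparr>verts = {0,1,2,3}, adj = (\<lambda>x y. x \<in> {0,1,2,3} \<and> y \<in> {0,1,2,3} \<and>
        ((x + 1) mod 4 = y \<or> (y + 1) mod 4 = x))\<rparr>"
text \<open>Complement of the path 0-1-2: single edge 0-2, vertex 1 isolated.\<close>
definition P3bar :: "nat graph" where
  "P3bar = \<lparr>verts = {0,1,2}, adj = (\<lambda>x y. {x, y} = {0, 2} \<and> x \<noteq> y)\<rparr>"

definition iota :: "nat graph \<Rightarrow> 'a graph \<Rightarrow> bool" where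
  "iota J G \<longleftrightarrow> graph G \<and> has_induced J G"

definition union_complete :: "nat graph \<Rightarrow> 'a graph \<Rightarrow> bool" where
  "union_complete J G \<longleftrightarrow> (\<exists>A B. A \<inter> B = {} \<and> A \<union> B = verts G \<and>
     (\<forall>x\<in>A. \<forall>y\<in>B. \<not> adj G x y) \<and> iota J (induced G A) \<and> clique G B)"

definition join_complete :: "nat graph \<Rightarrow> 'a graph \<Rightarrow> bool" where
  "join_complete J G \<longleftrightarrow> (\<exists>A B. A \<inter> B = {} \<and> A \<union> B = verts G \<and>
     (\<forall>x\<in>A. \<forall>y\<in>B. adj G x y) \<and> iota J (induced G A) \<and> clique G B)"

definition ARS2_part :: "nat \<Rightarrow> 'a graph \<Rightarrow> ('a graph \<Rightarrow> bool) \<Rightarrow> bool" where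
  "ARS2_part l H Fam \<longleftrightarrow> (\<exists>P. ipartition (verts H) l P \<and> Fam (induced H (P 0)) \<and>
     (\<forall>i. 1 \<le> i \<and> i < l \<longrightarrow> clique H (P i)))"

definition ARS_graph :: "nat \<Rightarrow> 'a graph \<Rightarrow> bool" where
  "ARS_graph l H \<longleftrightarrow> 0 < l \<and>
    \<comment> \<open>ARS1\<close>
    (\<forall>s. 1 \<le> s \<and> s \<le> l \<longrightarrow> st_partitionable H s (l - s)) \<and>
    \<comment> \<open>ARS2\<close>
    ARS2_part l H (union_complete K1) \<and> ARS2_part l H (join_complete S3) \<and>
    ARS2_part l H (join_complete C4) \<and> ARS2_part l H (join_complete P3bar) \<and>
    \<comment> \<open>ARS3 and ARS4\<close>
    (\<exists>X0. partition_on (verts H) X0 \<and> card X0 = l \<and>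
       (\<exists>A B a1 a2 b1 b2. A \<in> X0 \<and> B \<in> X0 \<and> A \<noteq> B \<and>
          nonedges (induced H A) = {{a1, a2}} \<and> nonedges (induced H B) = {{b1, b2}} \<and>
          stable H {a1, a2, b1, b2} \<and>
          (\<forall>X\<in>X0 - {A, B}. clique H X)) \<and>
       (\<forall>\<X>. partition_on (verts H) \<X> \<and> card \<X> = l \<and> \<X> \<noteq> X0 \<longrightarrow>
          (\<exists>X\<in>\<X>. card (nonedges (induced H X)) \<ge> 2)))"

end

(* A partition of an ARS graph H into at most l cliques could be refined into exactly
   l cliques (H has at least l vertices, as the partition X0 of ARS3 shows); by ARS4 that partition
   would be X0, which has a part with a non-edge.  So H(0, l) is contained in Forb(H), while ARS1
   and the K1-or-clique partition of ARS2 show that H itself lies in H(s, l' - s) whenever l < l'.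
   Hence chi_c(H) = l.

   For a reduced graph G there is an s < l such that H has no partition into a part embedding into
   G, s stable sets and l - 1 - s cliques.  By Ramsey's theorem a large G contains an independent
   set of size |V(H)| or a clique of size 5|V(H)| + 4, which absorbs a stable part or a clique part
   of an ARS1 partition; this settles every case except a clique with s = 0.  There, two non-edges
   of G have at most four endpoints W inducing S3, the complement of P3 or C4.  Either a vertex of
   W misses |V(H)| vertices of the clique, which realises the ARS2 partition with a part in
   K1 or clique, or |V(H)| clique vertices are complete to W, which realises the ARS2 partition
   with a part in the join of that graph with a clique.  So large reduced graphs have at most one
   non-edge, and such a graph is a 2-star with S the union of its non-edges. *)

theory Submission
  imports "HOL-Library.Ramsey" "HOL-Combinatorics.Permutations" Defs
begin

lemma verts_induced [simp]: "verts (induced G X) = X"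
  by (simp add: induced_def)

lemma adj_induced [simp]: "adj (induced G X) x y \<longleftrightarrow> x \<in> X \<and> y \<in> X \<and> adj G x y"
  by (simp add: induced_def)

lemma induced_induced: "A \<subseteq> X \<Longrightarrow> induced (induced G X) A = induced G A"
  by (auto simp: induced_def)

lemma graph_finite: "graph G \<Longrightarrow> finite (verts G)"
  by (simp add: graph_def)

lemma graph_sym: "graph G \<Longrightarrow> adj G x y \<longleftrightarrow> adj G y x"
  unfolding graph_def by blast

lemma graph_irrefl: "graph G \<Longrightarrow> \<not> adj G x x"
  unfolding graph_def by blast

lemma graph_induced: "graph G \<Longrightarrow> X \<subseteq> verts G \<Longrightarrow> graph (induced G X)"
  unfolding graph_def by (auto dest: finite_subset)

lemma clique_subset: "clique G X \<Longrightarrow> Y \<subseteq> X \<Longrightarrow> clique G Y"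
  unfolding clique_def by blast

lemma clique_induced: "clique (induced G X) Y \<Longrightarrow> Y \<subseteq> X \<Longrightarrow> clique G Y"
  unfolding clique_def by auto

lemma clique_card_le_1: "finite X \<Longrightarrow> card X \<le> 1 \<Longrightarrow> clique G X"
  unfolding clique_def by (metis One_nat_def card_le_Suc0_iff_eq)

lemma nonedgeI:
  "x \<in> verts G \<Longrightarrow> y \<in> verts G \<Longrightarrow> x \<noteq> y \<Longrightarrow> \<not> adj G x y \<Longrightarrow> {x, y} \<in> nonedges G"
  unfolding nonedges_def by blast

lemma finite_nonedges: "graph G \<Longrightarrow> finite (nonedges G)"
  by (rule finite_subset[of _ "Pow (verts G)"]) (auto simp: nonedges_def graph_finite)

lemma nonedges_induced_clique: "clique G X \<Longrightarrow> nonedges (induced G X) = {}"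
  unfolding nonedges_def clique_def by auto

section \<open>Induced embeddings\<close>

definition induced_embedding :: "('a \<Rightarrow> 'b) \<Rightarrow> 'a graph \<Rightarrow> 'b graph \<Rightarrow> bool" where
  "induced_embedding \<phi> K J \<longleftrightarrow> inj_on \<phi> (verts K) \<and> \<phi> ` verts K \<subseteq> verts J \<and>
     (\<forall>x\<in>verts K. \<forall>y\<in>verts K. adj J (\<phi> x) (\<phi> y) \<longleftrightarrow> adj K x y)"

lemma induced_embedding_comp:
  "induced_embedding \<phi> K J \<Longrightarrow> induced_embedding \<psi> J L \<Longrightarrow> induced_embedding (\<psi> \<circ> \<phi>) K L"
  unfolding induced_embedding_def by (auto simp: comp_inj_on inj_on_subset image_subset_iff)

lemma induced_embedding_inv:
  assumes \<phi>: "induced_embedding \<phi> K J" and onto: "\<phi> ` verts K = verts J"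
  shows "induced_embedding (inv_into (verts K) \<phi>) J K"
  unfolding induced_embedding_def
proof (intro conjI ballI)
  show "inj_on (inv_into (verts K) \<phi>) (verts J)"
    using onto by (metis inj_on_inv_into order_refl)
  show "inv_into (verts K) \<phi> ` verts J \<subseteq> verts K"
    using onto by (auto intro: inv_into_into)
next
  fix x y assume "x \<in> verts J" "y \<in> verts J"
  then show "adj K (inv_into (verts K) \<phi> x) (inv_into (verts K) \<phi> y) \<longleftrightarrow> adj J x y"
    using \<phi> onto unfolding induced_embedding_def by (metis f_inv_into_f inv_into_into)
qed

lemma induced_embedding_restrict:
  assumes "induced_embedding \<phi> K J" and "X \<subseteq> verts K"
  shows "induced_embedding \<phi> (induced K X) (induced J (\<phi> ` X))"
  using assms unfolding induced_embedding_def by (auto intro: inj_on_subset)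

lemma iso_iff_induced_embedding:
  "iso G H \<longleftrightarrow> (\<exists>f. induced_embedding f G H \<and> f ` verts G = verts H)"
  unfolding iso_def induced_embedding_def bij_betw_def by (intro ex_cong1) auto

lemma has_induced_iff_induced_embedding:
  "has_induced J K \<longleftrightarrow> (\<exists>\<phi>. induced_embedding \<phi> K J)"
proof
  assume "has_induced J K"
  then obtain X f where X: "X \<subseteq> verts J" and f: "induced_embedding f (induced J X) K"
    and onto: "f ` X = verts K"
    unfolding has_induced_def iso_iff_induced_embedding by auto
  have "induced_embedding (inv_into X f) K (induced J X)"
    using induced_embedding_inv[OF f] onto by simp
  moreover have "induced_embedding id (induced J X) J"
    using X unfolding induced_embedding_def by auto
  ultimately show "\<exists>\<phi>. induced_embedding \<phi> K J"
    using induced_embedding_comp by blast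
next
  assume "\<exists>\<phi>. induced_embedding \<phi> K J"
  then obtain \<phi> where \<phi>: "induced_embedding \<phi> K J" by blast
  then have "induced_embedding \<phi> K (induced J (\<phi> ` verts K))"
    unfolding induced_embedding_def by auto
  then have "iso (induced J (\<phi> ` verts K)) K"
    unfolding iso_iff_induced_embedding
    using induced_embedding_inv[of \<phi> K "induced J (\<phi> ` verts K)"]
      inv_into_image_cancel[of \<phi> "verts K" "verts K"]
    by (auto simp: induced_embedding_def)
  moreover have "\<phi> ` verts K \<subseteq> verts J"
    using \<phi> by (simp add: induced_embedding_def)
  ultimately show "has_induced J K"
    unfolding has_induced_def by blast
qed

lemma has_induced_trans: "has_induced J K \<Longrightarrow> has_induced K L \<Longrightarrow> has_induced J L"
  unfolding has_induced_iff_induced_embedding by (metis induced_embedding_comp)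

lemma clique_image:
  "induced_embedding \<phi> K J \<Longrightarrow> X \<subseteq> verts K \<Longrightarrow> clique K X \<Longrightarrow> clique J (\<phi> ` X)"
  unfolding induced_embedding_def clique_def by (auto simp: subset_iff)

lemma stable_image:
  "induced_embedding \<phi> K J \<Longrightarrow> X \<subseteq> verts K \<Longrightarrow> stable K X \<Longrightarrow> stable J (\<phi> ` X)"
  unfolding induced_embedding_def stable_def by (auto simp: subset_iff)

lemma clique_vimage:
  "induced_embedding \<phi> K J \<Longrightarrow> clique J X \<Longrightarrow> clique K (\<phi> -` X \<inter> verts K)"
  unfolding induced_embedding_def clique_def inj_on_def by blast

text \<open>\<open>Forb\<close> and \<open>Hst\<close> consist of graphs on \<open>nat\<close>, so a graph \<open>H\<close> on an arbitrary type is
  compared with them through an isomorphic copy.\<close>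

lemma obtain_nat_copy:
  assumes "graph H"
  obtains G :: "nat graph" and \<phi> where "graph G" "induced_embedding \<phi> H G" "\<phi> ` verts H = verts G"
proof -
  obtain \<phi> :: "'a \<Rightarrow> nat" where \<phi>: "inj_on \<phi> (verts H)"
    using finite_imp_inj_to_nat_seg[OF graph_finite[OF assms]] by blast
  define G where "G = \<lparr>verts = \<phi> ` verts H,
    adj = (\<lambda>u v. \<exists>x\<in>verts H. \<exists>y\<in>verts H. u = \<phi> x \<and> v = \<phi> y \<and> adj H x y)\<rparr>"
  have "induced_embedding \<phi> H G"
    using \<phi> unfolding induced_embedding_def G_def by (auto simp: inj_on_eq_iff)
  moreover have "graph G"
    using assms inj_on_eq_iff[OF \<phi>] unfolding graph_def G_def by fastforce
  moreover have "\<phi> ` verts H = verts G"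
    by (simp add: G_def)
  ultimately show ?thesis
    using that by blast
qed

lemma card_le_1_if_has_induced_K1:
  assumes "has_induced K1 G"
  shows "card (verts G) \<le> 1"
proof -
  obtain \<phi> where "inj_on \<phi> (verts G)" and "\<phi> ` verts G \<subseteq> {0 :: nat}"
    using assms unfolding has_induced_iff_induced_embedding induced_embedding_def K1_def by auto
  then have "card (verts G) \<le> card {0 :: nat}"
    by (intro card_inj_on_le) auto
  then show ?thesis
    by simp
qed

lemma has_induced_homogeneous:
  assumes G: "graph G" and J: "graph J" and "finite X" and "finite R" and "R \<subseteq> verts J"
    and "card X \<le> card R"
    and X: "\<forall>x\<in>X. \<forall>y\<in>X. x \<noteq> y \<longrightarrow> adj G x y = c"
    and R: "\<forall>x\<in>R. \<forall>y\<in>R. x \<noteq> y \<longrightarrow> adj J x y = c"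
  shows "has_induced J (induced G X)"
proof -
  obtain f where f: "f ` X \<subseteq> R" "inj_on f X"
    using card_le_inj[OF assms(3,4,6)] by blast
  have "induced_embedding f (induced G X) J"
    unfolding induced_embedding_def
  proof (intro conjI ballI)
    show "inj_on f (verts (induced G X))" and "f ` verts (induced G X) \<subseteq> verts J"
      using f \<open>R \<subseteq> verts J\<close> by auto
  next
    fix x y
    assume "x \<in> verts (induced G X)" and "y \<in> verts (induced G X)"
    then show "adj J (f x) (f y) \<longleftrightarrow> adj (induced G X) x y"
      using X R f inj_on_eq_iff[OF f(2)] graph_irrefl[OF G] graph_irrefl[OF J]
      by (cases "x = y") (auto simp: image_subset_iff)
  qed
  then show ?thesis
    using has_induced_iff_induced_embedding by blast
qed

lemma has_induced_extend_by_clique: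
  assumes K: "graph K" and J: "graph J"
    and AB: "verts K = A \<union> B" "A \<inter> B = {}"
    and \<alpha>: "induced_embedding \<alpha> (induced K A) J"
    and B: "clique K B" and C: "C \<subseteq> verts J" "clique J C" "finite C" "card B \<le> card C"
    and disj: "\<alpha> ` A \<inter> C = {}"
    and cross_K: "\<forall>x\<in>A. \<forall>y\<in>B. adj K x y = c"
    and cross_J: "\<forall>x\<in>A. \<forall>y\<in>C. adj J (\<alpha> x) y = c"
  shows "has_induced J K"
proof -
  have "finite B"
    using graph_finite[OF K] AB(1) by simp
  then obtain \<psi> where \<psi>: "\<psi> ` B \<subseteq> C" "inj_on \<psi> B"
    using card_le_inj[OF _ C(3,4)] by blast
  define \<phi> where "\<phi> x = (if x \<in> A then \<alpha> x else \<psi> x)" for x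
  have \<alpha>A: "inj_on \<alpha> A" "\<alpha> ` A \<subseteq> verts J"
    and \<alpha>_adj: "\<And>x y. x \<in> A \<Longrightarrow> y \<in> A \<Longrightarrow> adj J (\<alpha> x) (\<alpha> y) \<longleftrightarrow> adj K x y"
    using \<alpha> unfolding induced_embedding_def by auto
  have \<phi>A: "\<phi> x = \<alpha> x" if "x \<in> A" for x
    using that by (simp add: \<phi>_def)
  have \<phi>B: "\<phi> x = \<psi> x" "\<psi> x \<in> C" if "x \<in> B" for x
    using that AB(2) \<psi>(1) by (auto simp: \<phi>_def)
  have across: "\<phi> x \<noteq> \<phi> y \<and> (adj J (\<phi> x) (\<phi> y) \<longleftrightarrow> adj K x y)" if "x \<in> A" "y \<in> B" for x y
  proof -
    have "\<phi> x \<in> \<alpha> ` A" and "\<phi> y \<in> C"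
      using that \<phi>A \<phi>B by auto
    then show ?thesis
      using that disj cross_K cross_J \<phi>A by auto
  qed
  have preserves: "(\<phi> x = \<phi> y \<longleftrightarrow> x = y) \<and> (adj J (\<phi> x) (\<phi> y) \<longleftrightarrow> adj K x y)"
    if xy: "x \<in> verts K" "y \<in> verts K" for x y
  proof -
    consider "x \<in> A" "y \<in> A" | "x \<in> A" "y \<in> B" | "x \<in> B" "y \<in> A" | "x \<in> B" "y \<in> B"
      using xy unfolding AB(1) by blast
    then show ?thesis
    proof cases
      case 1
      then show ?thesis
        using \<phi>A \<alpha>_adj inj_on_eq_iff[OF \<alpha>A(1)] by simp
    next
      case 2
      then show ?thesis
        using across[of x y] AB(2) by auto
    next
      case 3
      then show ?thesis
        using across[of y x] AB(2) graph_sym[OF K, of x y] graph_sym[OF J, of "\<phi> x" "\<phi> y"] by auto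
    next
      case 4
      then show ?thesis
        using B C(2) \<phi>B inj_on_eq_iff[OF \<psi>(2)] graph_irrefl[OF K] graph_irrefl[OF J]
        unfolding clique_def by (cases "x = y") auto
    qed
  qed
  have "\<phi> ` verts K \<subseteq> verts J"
    using AB(1) \<alpha>A(2) \<phi>A \<phi>B C(1) by auto
  with preserves have "induced_embedding \<phi> K J"
    unfolding induced_embedding_def inj_on_def by blast
  then show ?thesis
    using has_induced_iff_induced_embedding by blast
qed

lemma has_induced_if_union_complete_K1:
  assumes K: "graph K" and J: "graph J" and "union_complete K1 K"
    and v: "v \<in> verts J" "v \<notin> C" "\<forall>y\<in>C. \<not> adj J v y"
    and C: "C \<subseteq> verts J" "clique J C" "finite C" "card (verts K) \<le> card C"
  shows "has_induced J K"
proof -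
  obtain A B where AB: "A \<inter> B = {}" "A \<union> B = verts K" and cross: "\<forall>x\<in>A. \<forall>y\<in>B. \<not> adj K x y"
    and A: "iota K1 (induced K A)" and B: "clique K B"
    using assms(3) unfolding union_complete_def by blast
  have "finite A"
    using graph_finite[OF K] AB(2) by (metis finite_Un)
  moreover have "card A \<le> 1"
    using A card_le_1_if_has_induced_K1[of "induced K A"] unfolding iota_def by simp
  ultimately have "\<forall>x\<in>A. \<forall>y\<in>A. x = y"
    by (metis One_nat_def card_le_Suc0_iff_eq)
  then have emb: "induced_embedding (\<lambda>_. v) (induced K A) J"
    using v(1) graph_irrefl[OF K] graph_irrefl[OF J]
    unfolding induced_embedding_def inj_on_def by auto
  have "B \<subseteq> verts K"
    using AB(2) by blast
  then have "card B \<le> card C"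
    using card_mono[OF graph_finite[OF K]] C(4) le_trans by blast
  moreover have "(\<lambda>_. v) ` A \<inter> C = {}"
    using v(2) by auto
  moreover have "\<forall>x\<in>A. \<forall>y\<in>B. adj K x y = False"
    using cross by simp
  moreover have "\<forall>x\<in>A. \<forall>y\<in>C. adj J ((\<lambda>_. v) x) y = False"
    using v(3) by simp
  ultimately show ?thesis
    by (rule has_induced_extend_by_clique[OF K J AB(2)[symmetric] AB(1) emb B C(1-3)])
qed

lemma has_induced_if_join_complete:
  assumes K: "graph K" and J: "graph J" and "join_complete F K"
    and \<phi>: "induced_embedding \<phi> F J" "\<phi> ` verts F \<inter> C = {}" "\<forall>x\<in>verts F. \<forall>y\<in>C. adj J (\<phi> x) y"
    and C: "C \<subseteq> verts J" "clique J C" "finite C" "card (verts K) \<le> card C"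
  shows "has_induced J K"
proof -
  obtain A B where AB: "A \<inter> B = {}" "A \<union> B = verts K" and cross: "\<forall>x\<in>A. \<forall>y\<in>B. adj K x y"
    and A: "iota F (induced K A)" and B: "clique K B"
    using assms(3) unfolding join_complete_def by blast
  obtain \<beta> where \<beta>: "induced_embedding \<beta> (induced K A) F"
    using A unfolding iota_def has_induced_iff_induced_embedding by blast
  have \<beta>A: "\<beta> ` A \<subseteq> verts F"
    using \<beta> by (simp add: induced_embedding_def)
  have "B \<subseteq> verts K"
    using AB(2) by blast
  then have "card B \<le> card C"
    using card_mono[OF graph_finite[OF K]] C(4) le_trans by blast
  moreover have "(\<phi> \<circ> \<beta>) ` A \<inter> C = {}"
    using \<phi>(2) \<beta>A by auto
  moreover have "\<forall>x\<in>A. \<forall>y\<in>B. adj K x y = True"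
    using cross by simp
  moreover have "\<forall>x\<in>A. \<forall>y\<in>C. adj J ((\<phi> \<circ> \<beta>) x) y = True"
    using \<phi>(3) \<beta>A by auto
  ultimately show ?thesis
    by (rule has_induced_extend_by_clique[OF K J AB(2)[symmetric] AB(1)
        induced_embedding_comp[OF \<beta> \<phi>(1)] B C(1-3)])
qed

lemma nonneighbours_induce_S3_or_P3bar:
  assumes J: "graph J" and "x \<in> verts J" "y \<in> verts J" "z \<in> verts J"
    and "x \<noteq> y" "x \<noteq> z" "y \<noteq> z" and "\<not> adj J x y" "\<not> adj J x z" and "{x, y, z} \<subseteq> W"
  shows "\<exists>F\<in>{S3, P3bar, C4}. \<exists>\<phi>. induced_embedding \<phi> F J \<and> \<phi> ` verts F \<subseteq> W"
proof -
  note sym = graph_sym[OF J, of y x] graph_sym[OF J, of z x] graph_sym[OF J, of z y]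
  note irr = graph_irrefl[OF J]
  show ?thesis
  proof (cases "adj J y z")
    case True
    define \<phi> where "\<phi> i = (if i = 0 then y else if i = 1 then x else z)" for i :: nat
    have "induced_embedding \<phi> P3bar J"
      unfolding induced_embedding_def P3bar_def \<phi>_def
      using assms sym True irr by (auto simp: inj_on_def doubleton_eq_iff)
    moreover have "\<phi> ` verts P3bar \<subseteq> W"
      using assms(10) by (auto simp: P3bar_def \<phi>_def)
    ultimately show ?thesis
      by blast
  next
    case False
    define \<phi> where "\<phi> i = (if i = 0 then x else if i = 1 then y else z)" for i :: nat
    have "induced_embedding \<phi> S3 J"
      unfolding induced_embedding_def S3_def \<phi>_def
      using assms sym False irr by (auto simp: inj_on_def)
    moreover have "\<phi> ` verts S3 \<subseteq> W"
      using assms(10) by (auto simp: S3_def \<phi>_def)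
    ultimately show ?thesis
      by blast
  qed
qed

lemma two_nonedges_induce_S3_P3bar_C4:
  assumes J: "graph J" and "a \<in> verts J" "b \<in> verts J" "c \<in> verts J" "d \<in> verts J"
    and "a \<noteq> b" "c \<noteq> d" and "\<not> adj J a b" "\<not> adj J c d" and "{a, b} \<noteq> {c, d}"
  shows "\<exists>F\<in>{S3, P3bar, C4}. \<exists>\<phi>. induced_embedding \<phi> F J \<and> \<phi> ` verts F \<subseteq> {a, b, c, d}"
proof -
  note S3_P3bar = nonneighbours_induce_S3_or_P3bar[OF J, where W = "{a, b, c, d}"]
  have ba: "\<not> adj J b a" and dc: "\<not> adj J d c"
    using assms(8,9) graph_sym[OF J, of a b] graph_sym[OF J, of c d] by auto
  consider (shared) "a = c \<or> a = d \<or> b = c \<or> b = d"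
    | (nonadjacent) "a \<noteq> c" "a \<noteq> d" "b \<noteq> c" "b \<noteq> d"
        "\<not> adj J a c \<or> \<not> adj J a d \<or> \<not> adj J b c \<or> \<not> adj J b d"
    | (C4) "a \<noteq> c" "a \<noteq> d" "b \<noteq> c" "b \<noteq> d"
        "adj J a c" "adj J a d" "adj J b c" "adj J b d"
    by blast
  then show ?thesis
  proof cases
    case shared
    then show ?thesis
    proof (elim disjE)
      assume "a = c"
      then show ?thesis
        using S3_P3bar[of a b d] assms by auto
    next
      assume "a = d"
      then show ?thesis
        using S3_P3bar[of a b c] assms dc by auto
    next
      assume "b = c"
      then show ?thesis
        using S3_P3bar[of b a d] assms ba by auto
    next
      assume "b = d"
      then show ?thesis
        using S3_P3bar[of b a c] assms ba dc by auto
    qed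
  next
    case nonadjacent
    then show ?thesis
      using S3_P3bar[of a b c] S3_P3bar[of a b d] S3_P3bar[of b a c] S3_P3bar[of b a d] assms ba
      by blast
  next
    case C4
    define \<phi> where "\<phi> i = (if i = 0 then a else if i = 1 then c else if i = 2 then b else d)"
      for i :: nat
    have "induced_embedding \<phi> C4 J"
      unfolding induced_embedding_def C4_def \<phi>_def
      using assms C4 ba dc graph_sym[OF J, of a c] graph_sym[OF J, of a d] graph_sym[OF J, of b c]
        graph_sym[OF J, of b d] graph_irrefl[OF J]
      by (auto simp: inj_on_def)
    moreover have "\<phi> ` verts C4 \<subseteq> {a, b, c, d}"
      by (auto simp: C4_def \<phi>_def)
    ultimately show ?thesis
      by blast
  qed
qed

lemma obtain_two_nonedges:
  assumes "1 < card (nonedges G)"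
  obtains a b c d where "a \<in> verts G" "b \<in> verts G" "c \<in> verts G" "d \<in> verts G"
    "a \<noteq> b" "c \<noteq> d" "\<not> adj G a b" "\<not> adj G c d" "{a, b} \<noteq> {c, d}"
proof -
  have "finite (nonedges G)"
    using assms card.infinite by fastforce
  then obtain e e' where "e \<in> nonedges G" "e' \<in> nonedges G" "e \<noteq> e'"
    using assms card_le_Suc0_iff_eq by (metis One_nat_def not_less)
  then show ?thesis
    using that unfolding nonedges_def by blast
qed

section \<open>Partitions\<close>

lemma ipartition_subset: "ipartition V n P \<Longrightarrow> i < n \<Longrightarrow> P i \<subseteq> V"
  unfolding ipartition_def by blast

lemma ipartition_image:
  assumes "inj_on \<phi> V" and "ipartition V n P"
  shows "ipartition (\<phi> ` V) n (\<lambda>i. \<phi> ` P i)"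
proof -
  have "\<phi> ` P i \<inter> \<phi> ` P j = {}" if "i < n" "j < n" "i \<noteq> j" for i j
    using assms that inj_on_image_Int[OF assms(1), of "P i" "P j"]
    by (simp add: ipartition_subset) (simp add: ipartition_def)
  with assms(2) show ?thesis
    unfolding ipartition_def by blast
qed

lemma ipartition_vimage:
  "\<phi> ` V \<subseteq> W \<Longrightarrow> ipartition W n P \<Longrightarrow> ipartition V n (\<lambda>i. \<phi> -` P i \<inter> V)"
  unfolding ipartition_def by blast

lemma ipartition_pad:
  "ipartition V n P \<Longrightarrow> n \<le> m \<Longrightarrow> ipartition V m (\<lambda>i. if i < n then P i else {})"
  unfolding ipartition_def
  by (auto split: if_splits) (meson IntI lessThan_iff mem_Collect_eq order_less_le_trans)

lemma ipartition_split:
  assumes P: "ipartition V n P" and "i < n" and "P i = A \<union> B" and "A \<inter> B = {}"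
  shows "ipartition V (Suc n) (P(i := A, n := B))"
proof -
  let ?Q = "P(i := A, n := B)" and ?\<sigma> = "\<lambda>j. if j = n then i else j"
  have "(\<Union>j<Suc n. ?Q j) = (\<Union>j<n. P j)"
    using assms(2,3) by (auto simp: lessThan_Suc)
  moreover have "?Q j \<inter> ?Q k = {}" if "j < Suc n" "k < Suc n" "j \<noteq> k" for j k
  proof (cases "{j, k} = {i, n}")
    case True
    then show ?thesis
      using assms(2,4) by (auto simp: doubleton_eq_iff)
  next
    case False
    then have "?\<sigma> j \<noteq> ?\<sigma> k" and "?\<sigma> j < n" and "?\<sigma> k < n"
      using that assms(2) by auto
    then have "P (?\<sigma> j) \<inter> P (?\<sigma> k) = {}"
      using P unfolding ipartition_def by blast
    moreover have "?Q j \<subseteq> P (?\<sigma> j)" and "?Q k \<subseteq> P (?\<sigma> k)"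
      using assms(2,3) by auto
    ultimately show ?thesis
      by blast
  qed
  ultimately show ?thesis
    using P unfolding ipartition_def by simp
qed

lemma ipartition_permute:
  assumes P: "ipartition V n P" and \<pi>: "\<pi> permutes {..<n}"
  shows "ipartition V n (P \<circ> \<pi>)"
proof -
  have "(\<Union>i<n. P (\<pi> i)) = \<Union> (P ` \<pi> ` {..<n})"
    by (simp add: image_image)
  also have "\<dots> = V"
    using P permutes_image[OF \<pi>] by (simp add: ipartition_def)
  finally show ?thesis
    using P permutes_in_image[OF \<pi>] permutes_inj[OF \<pi>]
    unfolding ipartition_def by (simp add: inj_eq)
qed

lemma partition_on_ipartition:
  assumes "ipartition V n P"
  shows "partition_on V (P ` {..<n} - {{}})" and "card (P ` {..<n} - {{}}) \<le> n"
proof -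
  show "partition_on V (P ` {..<n} - {{}})"
  proof (rule partition_onI)
    show "\<Union> (P ` {..<n} - {{}}) = V"
      using assms unfolding ipartition_def by blast
    show "{} \<notin> P ` {..<n} - {{}}"
      by blast
    fix p q
    assume "p \<in> P ` {..<n} - {{}}" "q \<in> P ` {..<n} - {{}}" "p \<noteq> q"
    then show "disjnt p q"
      using assms unfolding ipartition_def disjnt_def by blast
  qed
  have "card (P ` {..<n} - {{}}) \<le> card (P ` {..<n})"
    by (intro card_mono) auto
  also have "\<dots> \<le> n"
    using card_image_le[of "{..<n}" P] by simp
  finally show "card (P ` {..<n} - {{}}) \<le> n" .
qed

lemma partition_on_finite_part: "finite V \<Longrightarrow> partition_on V \<P> \<Longrightarrow> X \<in> \<P> \<Longrightarrow> finite X"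
  using partition_onD1 finite_subset by (metis Union_upper)

lemma partition_on_split_off:
  assumes P: "partition_on V \<P>" and X: "X \<in> \<P>" "x \<in> X" "X \<noteq> {x}"
  shows "partition_on V (insert {x} (insert (X - {x}) (\<P> - {X})))"
proof (rule partition_onI)
  have disj: "Y \<inter> X = {}" if "Y \<in> \<P>" "Y \<noteq> X" for Y
    using partition_onD2[OF P] that X(1) by (auto simp: disjoint_def)
  show "\<Union> (insert {x} (insert (X - {x}) (\<P> - {X}))) = V"
    using partition_onD1[OF P] X by blast
  show "{} \<notin> insert {x} (insert (X - {x}) (\<P> - {X}))"
    using partition_onD3[OF P] X by blast
  fix p q
  assume "p \<in> insert {x} (insert (X - {x}) (\<P> - {X}))" "q \<in> insert {x} (insert (X - {x}) (\<P> - {X}))"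
    and "p \<noteq> q"
  then consider "p \<in> {{x}, X - {x}}" "q \<in> {{x}, X - {x}}" | "p \<subseteq> X" "q \<in> \<P> - {X}"
    | "p \<in> \<P> - {X}" "q \<subseteq> X" | "p \<in> \<P> - {X}" "q \<in> \<P> - {X}"
    using X(2) by blast
  then show "disjnt p q"
  proof cases
    case 1
    with \<open>p \<noteq> q\<close> show ?thesis
      by (auto simp: disjnt_def)
  next
    case 2
    then show ?thesis
      using disj[of q] by (auto simp: disjnt_def)
  next
    case 3
    then show ?thesis
      using disj[of p] by (auto simp: disjnt_def)
  next
    case 4
    then show ?thesis
      using partition_onD2[OF P] \<open>p \<noteq> q\<close> by (auto simp: disjoint_def disjnt_def)
  qed
qed

lemma card_partition_on_split_off:
  assumes P: "partition_on V \<P>" "finite \<P>" and X: "X \<in> \<P>" "x \<in> X" "X \<noteq> {x}"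
  shows "card (insert {x} (insert (X - {x}) (\<P> - {X}))) = Suc (card \<P>)"
proof -
  have disj: "Y \<inter> X = {}" if "Y \<in> \<P>" "Y \<noteq> X" for Y
    using partition_onD2[OF P(1)] that X(1) by (auto simp: disjoint_def)
  have "{x} \<notin> insert (X - {x}) (\<P> - {X})"
    using disj X by blast
  moreover have "X - {x} \<notin> \<P> - {X}"
    using disj X by blast
  moreover have "card \<P> > 0"
    using P(2) X(1) card_gt_0_iff by blast
  ultimately show ?thesis
    using P(2) X(1) by simp
qed

lemma partition_on_card_le:
  assumes "finite V" and "partition_on V \<P>"
  shows "card \<P> \<le> card V"
proof -
  have "1 \<le> card X" if "X \<in> \<P>" for X
    using partition_on_finite_part[OF assms that] partition_onD3[OF assms(2)] that
    by (simp add: Suc_le_eq card_gt_0_iff) blast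
  then have "(\<Sum>X\<in>\<P>. 1) \<le> (\<Sum>X\<in>\<P>. card X)"
    by (rule sum_mono)
  also have "\<dots> = card V"
    using product_partition[OF assms(2)] partition_on_finite_part[OF assms] by simp
  finally show ?thesis
    by simp
qed

lemma partition_on_nonsingleton:
  assumes "finite V" and "partition_on V \<P>" and "card \<P> < card V"
  obtains X x where "X \<in> \<P>" "x \<in> X" "X \<noteq> {x}"
proof (rule ccontr)
  assume "\<not> thesis"
  then have single: "\<And>X x. X \<in> \<P> \<Longrightarrow> x \<in> X \<Longrightarrow> X = {x}"
    using that by blast
  have "card X = 1" if X: "X \<in> \<P>" for X
  proof -
    obtain x where "x \<in> X"
      using X partition_onD3[OF assms(2)] by (metis ex_in_conv)
    then have "X = {x}"
      by (rule single[OF X])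
    then show ?thesis
      by simp
  qed
  then have "(\<Sum>X\<in>\<P>. card X) = card \<P>"
    by simp
  moreover have "card V = (\<Sum>X\<in>\<P>. card X)"
    using product_partition[OF assms(2)] partition_on_finite_part[OF assms(1,2)] by simp
  ultimately show False
    using assms(3) by simp
qed

lemma partition_on_refine_card:
  assumes "finite V" and "partition_on V \<P>" and "\<forall>X\<in>\<P>. Q X"
    and hered: "\<And>X Y. Q X \<Longrightarrow> Y \<subseteq> X \<Longrightarrow> Q Y"
    and "card \<P> \<le> k" and "k \<le> card V"
  shows "\<exists>\<Q>. partition_on V \<Q> \<and> card \<Q> = k \<and> (\<forall>X\<in>\<Q>. Q X)"
  using assms(2,3,5)
proof (induction "k - card \<P>" arbitrary: \<P>)
  case 0
  then show ?case
    by (metis diff_is_0_eq le_antisym)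
next
  case (Suc d)
  have "card \<P> < card V"
    using Suc.hyps(2) \<open>k \<le> card V\<close> by linarith
  then obtain X x where X: "X \<in> \<P>" "x \<in> X" "X \<noteq> {x}"
    using partition_on_nonsingleton[OF \<open>finite V\<close> Suc.prems(1)] by blast
  let ?\<P>' = "insert {x} (insert (X - {x}) (\<P> - {X}))"
  have part: "partition_on V ?\<P>'"
    using partition_on_split_off[OF Suc.prems(1) X] .
  have card: "card ?\<P>' = Suc (card \<P>)"
    using card_partition_on_split_off[OF Suc.prems(1) _ X]
      finite_elements[OF \<open>finite V\<close> Suc.prems(1)] by blast
  have "\<forall>Y\<in>?\<P>'. Q Y"
    using Suc.prems(2) X hered by blast
  moreover have "d = k - card ?\<P>'" and "card ?\<P>' \<le> k"
    using Suc.hyps(2) card by linarith+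
  ultimately show ?case
    using Suc.hyps(1) part by blast
qed

section \<open>The value of chi_c\<close>

lemma st_partitionable_iso:
  assumes \<phi>: "induced_embedding \<phi> H G" and onto: "\<phi> ` verts H = verts G"
    and "st_partitionable H s t"
  shows "st_partitionable G s t"
proof -
  obtain P where P: "ipartition (verts H) (s + t) P"
    and stab: "\<forall>i<s. stable H (P i)" and cliq: "\<forall>i. s \<le> i \<and> i < s + t \<longrightarrow> clique H (P i)"
    using assms(3) unfolding st_partitionable_def by blast
  have "ipartition (verts G) (s + t) (\<lambda>i. \<phi> ` P i)"
    using ipartition_image[OF _ P] \<phi> onto unfolding induced_embedding_def by metis
  moreover have "\<forall>i<s. stable G (\<phi> ` P i)"
    using stab stable_image[OF \<phi>] ipartition_subset[OF P] by simp
  moreover have "\<forall>i. s \<le> i \<and> i < s + t \<longrightarrow> clique G (\<phi> ` P i)"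
    using cliq clique_image[OF \<phi>] ipartition_subset[OF P] by simp
  ultimately show ?thesis
    unfolding st_partitionable_def by blast
qed

lemma Hst_not_subset_Forb:
  assumes "graph H" and "st_partitionable H s t"
  shows "\<not> Hst s t \<subseteq> Forb H"
proof
  assume sub: "Hst s t \<subseteq> Forb H"
  obtain G :: "nat graph" and \<phi> where G: "graph G" and \<phi>: "induced_embedding \<phi> H G"
    and onto: "\<phi> ` verts H = verts G"
    using obtain_nat_copy[OF \<open>graph H\<close>] .
  have "G \<in> Hst s t"
    using G st_partitionable_iso[OF \<phi> onto assms(2)] by (simp add: Hst_def)
  moreover have "has_induced G H"
    using \<phi> has_induced_iff_induced_embedding by blast
  ultimately show False
    using sub by (auto simp: Forb_def)
qed

lemma Hst_0_subset_Forb: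
  assumes "\<not> st_partitionable H 0 l"
  shows "Hst 0 l \<subseteq> Forb H"
proof
  fix G assume G: "G \<in> Hst 0 l"
  then obtain P where P: "ipartition (verts G) l P" and cliq: "\<forall>i<l. clique G (P i)"
    unfolding Hst_def st_partitionable_def by auto
  show "G \<in> Forb H"
  proof (rule ccontr)
    assume "G \<notin> Forb H"
    then obtain \<phi> where \<phi>: "induced_embedding \<phi> H G"
      using G has_induced_iff_induced_embedding by (auto simp: Forb_def Hst_def)
    have "ipartition (verts H) l (\<lambda>i. \<phi> -` P i \<inter> verts H)"
      using ipartition_vimage[OF _ P] \<phi> unfolding induced_embedding_def by blast
    moreover have "\<forall>i<l. clique H (\<phi> -` P i \<inter> verts H)"
      using cliq clique_vimage[OF \<phi>] by blast
    ultimately have "st_partitionable H 0 l"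
      unfolding st_partitionable_def by auto
    with assms show False ..
  qed
qed

lemma chi_c_eqI:
  assumes "s \<le> l" and "Hst s (l - s) \<subseteq> F"
    and "\<And>l' s'. l < l' \<Longrightarrow> s' \<le> l' \<Longrightarrow> \<not> Hst s' (l' - s') \<subseteq> F"
  shows "chi_c F = l"
proof -
  let ?L = "{l. \<exists>s\<le>l. Hst s (l - s) \<subseteq> F}"
  have "l \<in> ?L"
    using assms(1,2) by blast
  moreover have "l' \<le> l" if "l' \<in> ?L" for l'
    using that assms(3) not_le by blast
  ultimately show ?thesis
    unfolding chi_c_def by (intro Max_eqI) (auto simp: finite_nat_set_iff_bounded_le)
qed

lemma st_partitionable_more_cliques:
  assumes "st_partitionable H s t" and "t \<le> t'"
  shows "st_partitionable H s t'"
proof -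
  obtain P where P: "ipartition (verts H) (s + t) P" and stab: "\<forall>i<s. stable H (P i)"
    and cliq: "\<forall>i. s \<le> i \<and> i < s + t \<longrightarrow> clique H (P i)"
    using assms(1) unfolding st_partitionable_def by blast
  have "ipartition (verts H) (s + t') (\<lambda>i. if i < s + t then P i else {})"
    using ipartition_pad[OF P] assms(2) by simp
  moreover have "clique H {}"
    by (simp add: clique_def)
  ultimately show ?thesis
    unfolding st_partitionable_def using stab cliq by auto
qed

lemma st_partitionable_more_stables:
  assumes "st_partitionable H s 0" and "s \<le> s'"
  shows "st_partitionable H s' 0"
proof -
  obtain P where P: "ipartition (verts H) s P" and stab: "\<forall>i<s. stable H (P i)"
    using assms(1) unfolding st_partitionable_def by auto
  have "ipartition (verts H) s' (\<lambda>i. if i < s then P i else {})"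
    using ipartition_pad[OF P assms(2)] .
  moreover have "stable H {}"
    by (simp add: stable_def)
  ultimately show ?thesis
    unfolding st_partitionable_def using stab by auto
qed

lemma ARS_graph_pos: "ARS_graph l H \<Longrightarrow> 0 < l"
  by (simp add: ARS_graph_def)

lemma ARS_graph_st_partitionable:
  "ARS_graph l H \<Longrightarrow> 1 \<le> s \<Longrightarrow> s \<le> l \<Longrightarrow> st_partitionable H s (l - s)"
  by (simp add: ARS_graph_def)

lemma ARS_graph_ARS2_part:
  assumes "ARS_graph l H"
  shows "ARS2_part l H (union_complete K1)" and "ARS2_part l H (join_complete S3)"
    and "ARS2_part l H (join_complete C4)" and "ARS2_part l H (join_complete P3bar)"
  using assms by (simp_all add: ARS_graph_def)

lemma ARS_graph_obtain_partition:
  assumes "ARS_graph l H"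
  obtains X0 A a1 a2 where "partition_on (verts H) X0" "card X0 = l" "A \<in> X0"
    "nonedges (induced H A) = {{a1, a2}}"
    "\<forall>\<X>. partition_on (verts H) \<X> \<and> card \<X> = l \<and> \<X> \<noteq> X0 \<longrightarrow>
       (\<exists>X\<in>\<X>. 2 \<le> card (nonedges (induced H X)))"
  using assms unfolding ARS_graph_def by (elim conjE exE) (rule that; assumption)

lemma ARS_graph_not_clique_partitionable:
  assumes "graph H" and "ARS_graph l H"
  shows "\<not> st_partitionable H 0 l"
proof
  assume "st_partitionable H 0 l"
  then obtain P where P: "ipartition (verts H) l P" and cliq: "\<forall>i<l. clique H (P i)"
    unfolding st_partitionable_def by auto
  obtain X0 A a1 a2 where X0: "partition_on (verts H) X0" "card X0 = l" and A: "A \<in> X0"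
    and nonedge: "nonedges (induced H A) = {{a1, a2}}"
    and unique: "\<forall>\<X>. partition_on (verts H) \<X> \<and> card \<X> = l \<and> \<X> \<noteq> X0 \<longrightarrow>
       (\<exists>X\<in>\<X>. 2 \<le> card (nonedges (induced H X)))"
    by (rule ARS_graph_obtain_partition[OF assms(2)])
  have fin: "finite (verts H)"
    using graph_finite[OF assms(1)] .
  have "\<exists>\<Q>. partition_on (verts H) \<Q> \<and> card \<Q> = l \<and> (\<forall>X\<in>\<Q>. clique H X)"
  proof (rule partition_on_refine_card[OF fin partition_on_ipartition(1)[OF P]])
    show "\<forall>X\<in>P ` {..<l} - {{}}. clique H X"
      using cliq by blast
    show "l \<le> card (verts H)"
      using partition_on_card_le[OF fin X0(1)] X0(2) by simp
  qed (use clique_subset partition_on_ipartition(2)[OF P] in auto)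
  then obtain \<Q> where \<Q>: "partition_on (verts H) \<Q>" "card \<Q> = l" "\<forall>X\<in>\<Q>. clique H X"
    by blast
  have "\<Q> = X0"
  proof (rule ccontr)
    assume "\<Q> \<noteq> X0"
    then obtain X where "X \<in> \<Q>" and "2 \<le> card (nonedges (induced H X))"
      using unique \<Q>(1,2) by blast
    then show False
      using \<Q>(3) nonedges_induced_clique by fastforce
  qed
  then have "nonedges (induced H A) = {}"
    using A \<Q>(3) nonedges_induced_clique by blast
  with nonedge show False
    by simp
qed

lemma ARS_graph_clique_partitionable_Suc:
  assumes "graph H" and "ARS_graph l H"
  shows "st_partitionable H 0 (Suc l)"
proof -
  obtain P where P: "ipartition (verts H) l P" and K1: "union_complete K1 (induced H (P 0))"
    and cliq: "\<forall>i. 1 \<le> i \<and> i < l \<longrightarrow> clique H (P i)"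
    using ARS_graph_ARS2_part(1)[OF assms(2)] unfolding ARS2_part_def by blast
  obtain A B where AB: "A \<inter> B = {}" "A \<union> B = P 0"
    and A: "iota K1 (induced (induced H (P 0)) A)" and B: "clique (induced H (P 0)) B"
    using K1 unfolding union_complete_def by auto
  have l: "0 < l"
    using ARS_graph_pos[OF assms(2)] .
  have A_sub: "A \<subseteq> verts H"
    using AB ipartition_subset[OF P l] by blast
  have "card A \<le> 1"
    using A card_le_1_if_has_induced_K1 induced_induced[of A "P 0" H] AB(2)
    unfolding iota_def by fastforce
  then have "clique H A"
    using clique_card_le_1 finite_subset[OF A_sub graph_finite[OF assms(1)]] by blast
  moreover have "clique H B"
    using clique_induced[OF B] AB(2) by blast
  ultimately have "clique H ((P(0 := A, l := B)) i)" if "i < Suc l" for i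
    using that cliq l by (cases "i = 0"; cases "i = l") auto
  moreover have "ipartition (verts H) (Suc l) (P(0 := A, l := B))"
    using ipartition_split[OF P l] AB by simp
  ultimately show ?thesis
    unfolding st_partitionable_def by (intro exI[of _ "P(0 := A, l := B)"]) auto
qed

lemma ARS_graph_st_partitionable_beyond:
  assumes "graph H" and "ARS_graph l H" and "l < l'" and "s \<le> l'"
  shows "st_partitionable H s (l' - s)"
proof (cases "s = 0")
  case True
  then show ?thesis
    using st_partitionable_more_cliques[OF ARS_graph_clique_partitionable_Suc[OF assms(1,2)], of l']
      assms(3) by simp
next
  case False
  show ?thesis
  proof (cases "s \<le> l")
    case True
    then show ?thesis
      using st_partitionable_more_cliques[OF ARS_graph_st_partitionable[OF assms(2), of s]]
        \<open>s \<noteq> 0\<close> assms(3) by simp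
  next
    case False
    then have "st_partitionable H s 0"
      using st_partitionable_more_stables[of H l s] ARS_graph_st_partitionable[OF assms(2), of l]
        ARS_graph_pos[OF assms(2)] False by simp
    then show ?thesis
      using st_partitionable_more_cliques by blast
  qed
qed

theorem chi_c_Forb_ARS_graph:
  assumes "graph H" and "ARS_graph l H"
  shows "chi_c (Forb H) = l"
proof (rule chi_c_eqI)
  show "Hst 0 (l - 0) \<subseteq> Forb H"
    using Hst_0_subset_Forb ARS_graph_not_clique_partitionable[OF assms] by simp
  show "\<not> Hst s' (l' - s') \<subseteq> Forb H" if "l < l'" "s' \<le> l'" for l' s'
    using Hst_not_subset_Forb[OF assms(1) ARS_graph_st_partitionable_beyond[OF assms that]] .
qed simp

section \<open>Large reduced graphs\<close>

definition iota_partitionable :: "nat graph \<Rightarrow> nat \<Rightarrow> nat \<Rightarrow> 'a graph \<Rightarrow> bool" where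
  "iota_partitionable J l s G \<longleftrightarrow> (\<exists>P. ipartition (verts G) l P \<and>
     has_induced J (induced G (P 0)) \<and>
     (\<forall>i. 1 \<le> i \<and> i \<le> s \<longrightarrow> stable G (P i)) \<and>
     (\<forall>i. s + 1 \<le> i \<and> i < l \<longrightarrow> clique G (P i)))"

lemma iota_partitionable_iso:
  assumes \<phi>: "induced_embedding \<phi> H G" and onto: "\<phi> ` verts H = verts G"
    and "s < l" and "iota_partitionable J l s H"
  shows "iota_partitionable J l s G"
proof -
  obtain P where P: "ipartition (verts H) l P" and J: "has_induced J (induced H (P 0))"
    and stab: "\<forall>i. 1 \<le> i \<and> i \<le> s \<longrightarrow> stable H (P i)"
    and cliq: "\<forall>i. s + 1 \<le> i \<and> i < l \<longrightarrow> clique H (P i)"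
    using assms(4) unfolding iota_partitionable_def by blast
  have P0: "P 0 \<subseteq> verts H"
    using ipartition_subset[OF P] \<open>s < l\<close> by simp
  have "induced_embedding \<phi> (induced H (P 0)) (induced G (\<phi> ` P 0))"
    using induced_embedding_restrict[OF \<phi> P0] .
  then have "induced_embedding (inv_into (P 0) \<phi>) (induced G (\<phi> ` P 0)) (induced H (P 0))"
    using induced_embedding_inv by fastforce
  then have "has_induced J (induced G (\<phi> ` P 0))"
    using J has_induced_trans has_induced_iff_induced_embedding by blast
  moreover have "ipartition (verts G) l (\<lambda>i. \<phi> ` P i)"
    using ipartition_image[OF _ P] \<phi> onto unfolding induced_embedding_def by metis
  moreover have "\<forall>i. 1 \<le> i \<and> i \<le> s \<longrightarrow> stable G (\<phi> ` P i)"
    using stab stable_image[OF \<phi>] ipartition_subset[OF P] \<open>s < l\<close> by simp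
  moreover have "\<forall>i. s + 1 \<le> i \<and> i < l \<longrightarrow> clique G (\<phi> ` P i)"
    using cliq clique_image[OF \<phi>] ipartition_subset[OF P] by simp
  ultimately show ?thesis
    unfolding iota_partitionable_def by blast
qed

lemma red_Forb_obtain_not_iota_partitionable:
  assumes "graph H" and "J \<in> red (Forb H)"
  obtains s where "s < chi_c (Forb H)" and "\<not> iota_partitionable J (chi_c (Forb H)) s H"
proof -
  let ?l = "chi_c (Forb H)"
  obtain s where s: "s < ?l"
    and closed: "\<And>G :: nat graph. graph G \<Longrightarrow> iota_partitionable J ?l s G \<Longrightarrow> G \<in> Forb H"
    using assms(2) unfolding red_def reduced_def iota_partitionable_def Let_def
    by (auto simp: Suc_le_eq)
  have "\<not> iota_partitionable J ?l s H"
  proof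
    assume "iota_partitionable J ?l s H"
    obtain G :: "nat graph" and \<phi> where G: "graph G" and \<phi>: "induced_embedding \<phi> H G"
      and onto: "\<phi> ` verts H = verts G"
      using obtain_nat_copy[OF \<open>graph H\<close>] .
    have "G \<in> Forb H"
      using closed[OF G iota_partitionable_iso[OF \<phi> onto s]] \<open>iota_partitionable J ?l s H\<close> by blast
    moreover have "has_induced G H"
      using \<phi> has_induced_iff_induced_embedding by blast
    ultimately show False
      by (simp add: Forb_def)
  qed
  with s that show ?thesis
    by blast
qed

lemma iota_partitionable_if_ARS2_part:
  assumes "0 < l" and "ARS2_part l H Fam"
    and "\<And>X. X \<subseteq> verts H \<Longrightarrow> Fam (induced H X) \<Longrightarrow> has_induced J (induced H X)"
  shows "iota_partitionable J l 0 H"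
proof -
  obtain P where P: "ipartition (verts H) l P" and "Fam (induced H (P 0))"
    and cliq: "\<forall>i. 1 \<le> i \<and> i < l \<longrightarrow> clique H (P i)"
    using assms(2) unfolding ARS2_part_def by blast
  then have "has_induced J (induced H (P 0))"
    using assms(3) ipartition_subset[OF P assms(1)] by blast
  then show ?thesis
    unfolding iota_partitionable_def using P cliq by auto
qed

lemma many_nonneighbours_or_common_neighbours:
  assumes "finite W" and "finite K" and "card W * n + n \<le> card K"
  obtains v where "v \<in> W" "n \<le> card {u \<in> K. \<not> adj J v u}"
    | K' where "K' \<subseteq> K" "n \<le> card K'" "\<forall>v\<in>W. \<forall>u\<in>K'. adj J v u"
proof (cases "\<exists>v\<in>W. n \<le> card {u \<in> K. \<not> adj J v u}")
  case True
  then show ?thesis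
    using that(1) by blast
next
  case False
  let ?N = "\<Union>v\<in>W. {u \<in> K. \<not> adj J v u}"
  have "card ?N \<le> (\<Sum>v\<in>W. card {u \<in> K. \<not> adj J v u})"
    by (rule card_UN_le[OF assms(1)])
  also have "\<dots> \<le> (\<Sum>v\<in>W. n)"
    using False by (intro sum_mono) auto
  finally have "card ?N \<le> card W * n"
    by simp
  moreover have "card K - card ?N \<le> card (K - ?N)"
    by (intro diff_card_le_card_Diff finite_subset[OF _ assms(2)]) auto
  ultimately have "n \<le> card (K - ?N)"
    using assms(3) by linarith
  moreover have "\<forall>v\<in>W. \<forall>u\<in>K - ?N. adj J v u"
    by blast
  ultimately show ?thesis
    using that(2)[of "K - ?N"] by blast
qed

lemma ARS_graph_iota_partitionable_0_if_two_nonedges: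
  assumes H: "graph H" and ARS: "ARS_graph l H" and J: "graph J"
    and R: "R \<subseteq> verts J" "clique J R" "5 * card (verts H) + 4 \<le> card R"
    and "1 < card (nonedges J)"
  shows "iota_partitionable J l 0 H"
proof -
  let ?n = "card (verts H)"
  obtain a b c d where abcd: "a \<in> verts J" "b \<in> verts J" "c \<in> verts J" "d \<in> verts J"
    "a \<noteq> b" "c \<noteq> d" "\<not> adj J a b" "\<not> adj J c d" "{a, b} \<noteq> {c, d}"
    using obtain_two_nonedges[OF assms(7)] .
  define W where "W = {a, b, c, d}"
  define K0 where "K0 = R - W"
  have l: "0 < l"
    using ARS_graph_pos[OF ARS] .
  have W: "finite W" "W \<subseteq> verts J" "card W \<le> 4"
    using abcd unfolding W_def by (auto simp: card_insert_if)
  have K0: "finite K0" "K0 \<subseteq> verts J" "clique J K0" "W \<inter> K0 = {}"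
    using finite_subset[OF R(1) graph_finite[OF J]] R(1) clique_subset[OF R(2)]
    unfolding K0_def by auto
  have "card R - card W \<le> card K0"
    unfolding K0_def using W(1) by (rule diff_card_le_card_Diff)
  moreover have "card W * ?n \<le> 4 * ?n"
    using W(3) by simp
  \<comment> \<open>the constant \<open>5 |V(H)| + 4\<close> pays for removing \<open>W\<close> and for \<open>|W| + 1\<close> blocks of \<open>|V(H)|\<close>\<close>
  ultimately have big: "card W * ?n + ?n \<le> card K0"
    using R(3) W(3) by linarith
  have card_le: "card X \<le> card C" if "X \<subseteq> verts H" "?n \<le> card C" for X C
    using card_mono[OF graph_finite[OF H] that(1)] that(2) by linarith
  from many_nonneighbours_or_common_neighbours[OF W(1) K0(1) big, where J = J]
  show ?thesis
  proof cases
    case (1 v)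
    let ?C = "{u \<in> K0. \<not> adj J v u}"
    have v: "v \<in> verts J" "v \<notin> ?C" "\<forall>y\<in>?C. \<not> adj J v y"
      using 1(1) W(2) K0(4) by auto
    have C: "?C \<subseteq> verts J" "clique J ?C" "finite ?C"
      using K0(1,2) clique_subset[OF K0(3), of ?C] by auto
    show ?thesis
    proof (rule iota_partitionable_if_ARS2_part[OF l ARS_graph_ARS2_part(1)[OF ARS]])
      fix X
      assume X: "X \<subseteq> verts H" and "union_complete K1 (induced H X)"
      then show "has_induced J (induced H X)"
        using has_induced_if_union_complete_K1[OF graph_induced[OF H X] J _ v C] card_le[OF X 1(2)]
        by simp
    qed
  next
    case (2 K)
    obtain F \<phi> where F: "F \<in> {S3, P3bar, C4}" and \<phi>: "induced_embedding \<phi> F J" "\<phi> ` verts F \<subseteq> W"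
      using two_nonedges_induce_S3_P3bar_C4[OF J abcd] unfolding W_def by blast
    have "ARS2_part l H (join_complete F)"
      using F ARS_graph_ARS2_part[OF ARS] by auto
    have disj: "\<phi> ` verts F \<inter> K = {}"
      using \<phi>(2) 2(1) K0(4) by blast
    have adj: "\<forall>x\<in>verts F. \<forall>y\<in>K. adj J (\<phi> x) y"
      using \<phi>(2) 2(3) by blast
    have C: "K \<subseteq> verts J" "clique J K" "finite K"
      using 2(1) K0(1,2) clique_subset[OF K0(3), of K] finite_subset by auto
    show ?thesis
    proof (rule iota_partitionable_if_ARS2_part[OF l \<open>ARS2_part l H (join_complete F)\<close>])
      fix X
      assume X: "X \<subseteq> verts H" and "join_complete F (induced H X)"
      then show "has_induced J (induced H X)"
        using has_induced_if_join_complete[OF graph_induced[OF H X] J _ \<phi>(1) disj adj C]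
          card_le[OF X 2(2)] by simp
    qed
  qed
qed

lemma ARS_graph_iota_partitionable_stable:
  assumes H: "graph H" and ARS: "ARS_graph l H" and J: "graph J"
    and R: "R \<subseteq> verts J" "stable J R" "card (verts H) \<le> card R" and "s < l"
  shows "iota_partitionable J l s H"
proof -
  obtain P where P: "ipartition (verts H) l P" and stab: "\<forall>i<s + 1. stable H (P i)"
    and cliq: "\<forall>i. s + 1 \<le> i \<and> i < l \<longrightarrow> clique H (P i)"
    using ARS_graph_st_partitionable[OF ARS, of "s + 1"] \<open>s < l\<close>
    unfolding st_partitionable_def by auto
  have P0: "P 0 \<subseteq> verts H"
    using ipartition_subset[OF P] \<open>s < l\<close> by simp
  have "has_induced J (induced H (P 0))"
  proof (rule has_induced_homogeneous[OF H J _ _ R(1), where c = False])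
    show "finite (P 0)" and "finite R"
      using finite_subset[OF P0 graph_finite[OF H]] finite_subset[OF R(1) graph_finite[OF J]] .
    show "card (P 0) \<le> card R"
      using card_mono[OF graph_finite[OF H] P0] R(3) by linarith
  qed (use stab R(2) in \<open>auto simp: stable_def\<close>)
  then show ?thesis
    unfolding iota_partitionable_def using P stab cliq by auto
qed

lemma ARS_graph_iota_partitionable_clique:
  assumes H: "graph H" and ARS: "ARS_graph l H" and J: "graph J"
    and R: "R \<subseteq> verts J" "clique J R" "card (verts H) \<le> card R" and "0 < s" "s < l"
  shows "iota_partitionable J l s H"
proof -
  obtain P where P: "ipartition (verts H) l P" and stab: "\<forall>i<s. stable H (P i)"
    and cliq: "\<forall>i. s \<le> i \<and> i < l \<longrightarrow> clique H (P i)"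
    using ARS_graph_st_partitionable[OF ARS, of s] assms(7,8)
    unfolding st_partitionable_def by auto
  let ?Q = "P \<circ> transpose 0 s"
  have Q: "ipartition (verts H) l ?Q"
    using ipartition_permute[OF P permutes_swap_id] assms(8) by simp
  have Q0: "?Q 0 \<subseteq> verts H"
    using ipartition_subset[OF Q, of 0] assms(8) by simp
  have "has_induced J (induced H (?Q 0))"
  proof (rule has_induced_homogeneous[OF H J _ _ R(1), where c = True])
    show "finite (?Q 0)" and "finite R"
      using finite_subset[OF Q0 graph_finite[OF H]] finite_subset[OF R(1) graph_finite[OF J]] .
    show "card (?Q 0) \<le> card R"
      using card_mono[OF graph_finite[OF H] Q0] R(3) by linarith
  qed (use cliq R(2) assms(8) in \<open>auto simp: clique_def\<close>)
  moreover have "\<forall>i. 1 \<le> i \<and> i \<le> s \<longrightarrow> stable H (?Q i)"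
    using stab assms(7) by (auto simp: transpose_def)
  moreover have "\<forall>i. s + 1 \<le> i \<and> i < l \<longrightarrow> clique H (?Q i)"
    using cliq by (auto simp: transpose_def)
  ultimately show ?thesis
    unfolding iota_partitionable_def using Q by blast
qed

lemma ramsey_graph:
  "\<exists>r. \<forall>J :: 'a graph. graph J \<and> r \<le> card (verts J) \<longrightarrow>
    (\<exists>R\<subseteq>verts J. card R = m \<and> clique J R) \<or> (\<exists>R\<subseteq>verts J. card R = n \<and> stable J R)"
proof -
  obtain r where r: "\<forall>(V :: 'a set) E. finite V \<and> r \<le> card V \<longrightarrow>
      (\<exists>R\<subseteq>V. card R = m \<and> Ramsey.clique R E \<or> card R = n \<and> indep R E)"
    using ramsey2 by blast
  show ?thesis
  proof (intro exI[of _ r] allI impI, elim conjE)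
    fix J :: "'a graph"
    assume J: "graph J" and "r \<le> card (verts J)"
    let ?E = "{{x, y} | x y. adj J x y}"
    have "clique J R" if R: "Ramsey.clique R ?E" for R
      unfolding clique_def
    proof (intro ballI impI)
      fix v w
      assume "v \<in> R" "w \<in> R" "v \<noteq> w"
      then obtain x y where "{v, w} = {x, y}" "adj J x y"
        using R unfolding Ramsey.clique_def by blast
      then show "adj J v w"
        using graph_sym[OF J, of x y] by (auto simp: doubleton_eq_iff)
    qed
    moreover have "stable J R" if R: "indep R ?E" for R
      unfolding stable_def
    proof (intro ballI)
      fix v w
      assume "v \<in> R" "w \<in> R"
      then show "\<not> adj J v w"
        using R graph_irrefl[OF J, of v] unfolding indep_def by (cases "v = w") blast+
    qed
    moreover obtain R where
      "R \<subseteq> verts J" "card R = m \<and> Ramsey.clique R ?E \<or> card R = n \<and> indep R ?E"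
      using r graph_finite[OF J] \<open>r \<le> card (verts J)\<close> by blast
    ultimately show "(\<exists>R\<subseteq>verts J. card R = m \<and> clique J R) \<or> (\<exists>R\<subseteq>verts J. card R = n \<and> stable J R)"
      by blast
  qed
qed

theorem ARS_graph_red_Forb_nonedges_le_1:
  assumes H: "graph H" and ARS: "ARS_graph l H"
  shows "\<exists>n0. \<forall>G\<in>red (Forb H). n0 \<le> card (verts G) \<longrightarrow> card (nonedges G) \<le> 1"
proof -
  let ?n = "card (verts H)"
  obtain r where r: "\<forall>J :: nat graph. graph J \<and> r \<le> card (verts J) \<longrightarrow>
      (\<exists>R\<subseteq>verts J. card R = 5 * ?n + 4 \<and> clique J R) \<or> (\<exists>R\<subseteq>verts J. card R = ?n \<and> stable J R)"
    using ramsey_graph by blast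
  have chi: "chi_c (Forb H) = l"
    using chi_c_Forb_ARS_graph[OF H ARS] .
  have small: "card (nonedges G) \<le> 1" if G: "G \<in> red (Forb H)" "r \<le> card (verts G)" for G
  proof (rule ccontr)
    assume two: "\<not> card (nonedges G) \<le> 1"
    obtain s where s: "s < l" and not_part: "\<not> iota_partitionable G l s H"
      by (rule red_Forb_obtain_not_iota_partitionable[OF H G(1), unfolded chi])
    have J: "graph G"
      using G(1) by (simp add: red_def)
    from r[rule_format, OF conjI[OF J G(2)]] have "iota_partitionable G l s H"
    proof (elim disjE exE conjE)
      fix R
      assume R: "R \<subseteq> verts G" "clique G R" and card_R: "card R = 5 * ?n + 4"
      show ?thesis
      proof (cases "s = 0")
        case True
        then show ?thesis
          using ARS_graph_iota_partitionable_0_if_two_nonedges[OF H ARS J R] card_R two by simp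
      next
        case False
        then show ?thesis
          using ARS_graph_iota_partitionable_clique[OF H ARS J R] card_R s by simp
      qed
    next
      fix R
      assume R: "R \<subseteq> verts G" "stable G R" and card_R: "card R = ?n"
      then show ?thesis
        using ARS_graph_iota_partitionable_stable[OF H ARS J R] card_R s by simp
    qed
    with not_part show False ..
  qed
  show ?thesis
  proof (intro exI[of _ r] ballI impI)
    fix G
    assume "G \<in> red (Forb H)" and "r \<le> card (verts G)"
    then show "card (nonedges G) \<le> 1"
      by (rule small)
  qed
qed

lemma s_star_2_if_nonedges_le_1:
  assumes G: "graph G" and "card (nonedges G) \<le> 1"
  shows "s_star 2 G"
proof -
  let ?S = "\<Union> (nonedges G)"
  have "card ?S \<le> 2"
  proof (cases "nonedges G = {}")
    case False
    then obtain e where e: "nonedges G = {e}"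
      using assms(2) card_le_Suc0_iff_eq[OF finite_nonedges[OF G]] by auto
    then have "e \<in> nonedges G"
      by simp
    then obtain x y where "e = {x, y}"
      unfolding nonedges_def by blast
    with e show ?thesis
      by (simp add: card_insert_if)
  qed simp
  moreover have sub: "?S \<subseteq> verts G"
    unfolding nonedges_def by blast
  moreover have "clique G (verts G - ?S)"
    unfolding clique_def
  proof (intro ballI impI)
    fix x y
    assume "x \<in> verts G - ?S" "y \<in> verts G - ?S" "x \<noteq> y"
    then show "adj G x y"
      using nonedgeI[of x G y] by blast
  qed
  moreover have "\<forall>v\<in>?S. \<forall>u\<in>verts G - ?S. adj G v u"
  proof (intro ballI)
    fix v u
    assume "v \<in> ?S" "u \<in> verts G - ?S"
    then show "adj G v u"
      using nonedgeI[of v G u] sub by blast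
  qed
  ultimately show ?thesis
    unfolding s_star_def by (intro exI[of _ ?S]) blast
qed

theorem corollary3p3:
  fixes H :: "'a graph" and l :: nat
  assumes "graph H" and "ARS_graph l H"
  shows "chi_c_graph H = l \<and>
         (\<exists>n0. \<forall>G\<in>red (Forb H). card (verts G) \<ge> n0 \<longrightarrow> card (nonedges G) \<le> 1) \<and>
         critical 2 H"
proof (intro conjI)
  show "chi_c_graph H = l"
    using chi_c_Forb_ARS_graph[OF assms] by (simp add: chi_c_graph_def)
  show "\<exists>n0. \<forall>G\<in>red (Forb H). card (verts G) \<ge> n0 \<longrightarrow> card (nonedges G) \<le> 1"
    using ARS_graph_red_Forb_nonedges_le_1[OF assms] .
  then obtain n0 where "\<forall>G\<in>red (Forb H). card (verts G) \<ge> n0 \<longrightarrow> card (nonedges G) \<le> 1" ..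
  then have "\<forall>G\<in>red (Forb H). card (verts G) \<ge> n0 \<longrightarrow> s_star 2 G"
    using s_star_2_if_nonedges_le_1 by (auto simp: red_def)
  then show "critical 2 H"
    unfolding critical_def by blast
qed

end
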